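(* Let $A\in\mathbb{R}^{m\times n}_+$ with every row containing a positive entry, $(r,c)\in\mathbb{R}^m_{++}\times\mathbb{R}^n_{++}$ with $\langle r,1_m\rangle=\langle c,1_n\rangle$, $y\in\mathbb{R}^n_{++}$, and let $\emptyset\ne T\subsetneq[n]$ have margin $\gamma>0$. Let $h:=h^{A,r,y}_T$. If $\sum_{i\in N(T)}r_i\ge\sum_{j\in T}c_j$, then for any $\delta\in[0,\gamma)$ there is a finite solution $\alpha<\infty$ to the equation $h(\alpha)=h(1)+\delta$.
   Context: $N(T):=\{i\in[m]:\exists j\in T,\ A_{ij}>0\}$. For $y\in\mathbb{R}^n_{++}$ define $c^{A,r}_j(y):=\sum_{i\in[m]}r_i\frac{A_{ij}y_j}{\sum_{k\in[n]}A_{ik}y_k}$ (the column sums after row-normalizing $A\,\mathrm{diag}(y)$ to row sums $r$). The margin of $T$ is the largest $\gamma\ge0$ such that some $\nu\in\mathbb{R}$ satisfies $\max_{j\in T}(c^{A,r}_j(y)-c_j)\le\nu-\gamma\le\nu+\gamma\le\min_{j\notin T}(c^{A,r}_j(y)-c_j)$. The proxy function is $h^{A,r,y}_T(\alpha):=\sum_{j\in T}c^{A,r}_j(y\circ(1_{\bar T}+\alpha1_T))=\sum_{i\in N(T)}r_i\frac{\alpha\mu_i}{1+(\alpha-1)\mu_i}$ with $\mu_i:=\frac{\sum_{j\in T}A_{ij}y_j}{\sum_{j\in[n]}A_{ij}y_j}$, where $\bar T=[n]\setminus T$, $1_T$ is the indicator of $T$, $\circ$ the entrywise product. *)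

theory Defs
  imports Complex_Main
begin

text \<open>Matrices/vectors are functions on naturals; rows are indexed by {0..<m},
columns by {0..<n}.\<close>

definition nbhd :: "nat \<Rightarrow> (nat \<Rightarrow> nat \<Rightarrow> real) \<Rightarrow> nat set \<Rightarrow> nat set" where
  "nbhd m A T = {i \<in> {0..<m}. \<exists>j\<in>T. A i j > 0}"

text \<open>Column sums after row-normalizing A diag(y) to row sums r.\<close>
definition colsum :: "nat \<Rightarrow> nat \<Rightarrow> (nat \<Rightarrow> nat \<Rightarrow> real) \<Rightarrow> (nat \<Rightarrow> real) \<Rightarrow> (nat \<Rightarrow> real) \<Rightarrow> nat \<Rightarrow> real" where
  "colsum m n A r y j = (\<Sum>i\<in>{0..<m}. r i * (A i j * y j) / (\<Sum>k\<in>{0..<n}. A i k * y k))"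

definition margin_cond :: "nat \<Rightarrow> nat \<Rightarrow> (nat \<Rightarrow> nat \<Rightarrow> real) \<Rightarrow> (nat \<Rightarrow> real) \<Rightarrow> (nat \<Rightarrow> real)
     \<Rightarrow> (nat \<Rightarrow> real) \<Rightarrow> nat set \<Rightarrow> real \<Rightarrow> bool" where
  "margin_cond m n A r c y T g \<longleftrightarrow> g \<ge> 0 \<and> (\<exists>\<nu>::real.
      (\<forall>j\<in>T. colsum m n A r y j - c j \<le> \<nu> - g) \<and>
      (\<forall>j\<in>{0..<n} - T. \<nu> + g \<le> colsum m n A r y j - c j))"

definition has_margin :: "nat \<Rightarrow> nat \<Rightarrow> (nat \<Rightarrow> nat \<Rightarrow> real) \<Rightarrow> (nat \<Rightarrow> real) \<Rightarrow> (nat \<Rightarrow> real)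
     \<Rightarrow> (nat \<Rightarrow> real) \<Rightarrow> nat set \<Rightarrow> real \<Rightarrow> bool" where
  "has_margin m n A r c y T g \<longleftrightarrow> margin_cond m n A r c y T g \<and>
      (\<forall>g'. margin_cond m n A r c y T g' \<longrightarrow> g' \<le> g)"

definition proxy :: "nat \<Rightarrow> nat \<Rightarrow> (nat \<Rightarrow> nat \<Rightarrow> real) \<Rightarrow> (nat \<Rightarrow> real) \<Rightarrow> (nat \<Rightarrow> real)
     \<Rightarrow> nat set \<Rightarrow> real \<Rightarrow> real" where
  "proxy m n A r y T \<alpha> = (\<Sum>j\<in>T. colsum m n A r (\<lambda>k. if k \<in> T then \<alpha> * y k else y k) j)"

end

theory Submission
  imports Defs
begin

text \<open>Let \<open>S\<^sub>i\<close> and \<open>U\<^sub>i\<close> be the masses of row \<open>i\<close> of \<open>A diag(y)\<close> on \<open>T\<close> and off \<open>T\<close>.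
  Then \<open>h(\<alpha>) = \<Sum>\<^sub>i r\<^sub>i \<alpha>S\<^sub>i / (\<alpha>S\<^sub>i + U\<^sub>i)\<close> is continuous for \<open>\<alpha> > 0\<close> and tends to
  \<open>\<Sum>\<^bsub>i\<in>N(T)\<^esub> r\<^sub>i\<close> as \<open>\<alpha> \<rightarrow> \<infinity>\<close>. The excesses \<open>colsum j - c j\<close> sum to zero over \<open>[n]\<close>,
  and the margin separates those on \<open>T\<close> from those off \<open>T\<close> by \<open>2\<gamma>\<close>; hence their sum over
  \<open>T\<close> is at most \<open>-\<gamma>\<close>, i.e. \<open>h(1) + \<gamma> \<le> \<Sum>\<^bsub>j\<in>T\<^esub> c\<^sub>j \<le> \<Sum>\<^bsub>i\<in>N(T)\<^esub> r\<^sub>i\<close>, and the intermediate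
  value theorem gives \<open>\<alpha> \<ge> 1\<close>.\<close>

definition row_mass :: "(nat \<Rightarrow> nat \<Rightarrow> real) \<Rightarrow> (nat \<Rightarrow> real) \<Rightarrow> nat set \<Rightarrow> nat \<Rightarrow> real" where
  "row_mass A y K i = (\<Sum>k\<in>K. A i k * y k)"

lemma row_mass_split:
  assumes "T \<subseteq> {0..<n}"
  shows "row_mass A y {0..<n} i = row_mass A y T i + row_mass A y ({0..<n} - T) i"
  unfolding row_mass_def using sum.subset_diff[OF assms] by (simp add: add.commute)

lemma row_mass_nonneg:
  assumes A_nonneg: "\<forall>i<m. \<forall>j<n. A i j \<ge> 0" and y_nonneg: "\<forall>j<n. y j \<ge> 0"
    and "K \<subseteq> {0..<n}" and "i < m"
  shows "row_mass A y K i \<ge> 0"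
  unfolding row_mass_def using assms by (intro sum_nonneg) auto

lemma row_mass_pos:
  assumes A_nonneg: "\<forall>i<m. \<forall>j<n. A i j \<ge> 0" and A_rows: "\<forall>i<m. \<exists>j<n. A i j > 0"
    and y_pos: "\<forall>j<n. y j > 0" and "i < m"
  shows "row_mass A y {0..<n} i > 0"
proof -
  obtain j where "j < n" "A i j > 0" using A_rows \<open>i < m\<close> by blast
  then show ?thesis
    unfolding row_mass_def using assms
    by (intro sum_pos2[where i = j]) (auto simp: less_imp_le)
qed

lemma nbhd_iff_row_mass_pos:
  assumes A_nonneg: "\<forall>i<m. \<forall>j<n. A i j \<ge> 0" and y_pos: "\<forall>j<n. y j > 0"
    and T_sub: "T \<subseteq> {0..<n}"
  shows "i \<in> nbhd m A T \<longleftrightarrow> i < m \<and> row_mass A y T i > 0"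
proof -
  have "finite T" using T_sub finite_subset by blast
  have "row_mass A y T i > 0 \<longleftrightarrow> (\<exists>j\<in>T. A i j * y j > 0)" if "i < m"
  proof -
    have terms_nonneg: "A i j * y j \<ge> 0" if "j \<in> T" for j
      using T_sub \<open>i < m\<close> that assms by (auto simp: less_imp_le)
    then have "row_mass A y T i \<ge> 0"
      unfolding row_mass_def by (simp add: sum_nonneg)
    then show ?thesis
      using sum_nonneg_eq_0_iff[OF \<open>finite T\<close> terms_nonneg] terms_nonneg
      unfolding row_mass_def by force
  qed
  moreover have "A i j * y j > 0 \<longleftrightarrow> A i j > 0" if "j \<in> T" for j
  proof -
    have "y j > 0" using that T_sub y_pos by auto
    then show ?thesis by (simp add: zero_less_mult_iff)
  qed
  ultimately show ?thesis
    unfolding nbhd_def by auto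
qed

lemma proxy_eq_row_mass:
  assumes T_sub: "T \<subseteq> {0..<n}"
  shows "proxy m n A r y T \<alpha> = (\<Sum>i\<in>{0..<m}. r i * (\<alpha> * row_mass A y T i /
            (\<alpha> * row_mass A y T i + row_mass A y ({0..<n} - T) i)))"
proof -
  define den where "den i = \<alpha> * row_mass A y T i + row_mass A y ({0..<n} - T) i" for i
  have scaled_mass: "row_mass A y' {0..<n} i = den i"
    if "y' = (\<lambda>k. if k \<in> T then \<alpha> * y k else y k)" for y' i
    using row_mass_split[OF T_sub, of A y' i] that
    unfolding den_def row_mass_def by (simp add: sum_distrib_left mult.left_commute)
  have "proxy m n A r y T \<alpha> = (\<Sum>j\<in>T. \<Sum>i\<in>{0..<m}. r i * (A i j * (\<alpha> * y j)) / den i)"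
    using scaled_mass unfolding proxy_def colsum_def row_mass_def
    by (intro sum.cong refl) auto
  also have "\<dots> = (\<Sum>i\<in>{0..<m}. \<Sum>j\<in>T. r i * (A i j * (\<alpha> * y j)) / den i)"
    by (rule sum.swap)
  also have "\<dots> = (\<Sum>i\<in>{0..<m}. r i * (\<alpha> * row_mass A y T i / den i))"
    unfolding row_mass_def
    by (intro sum.cong refl) (simp add: sum_divide_distrib[symmetric] sum_distrib_left mult_ac)
  finally show ?thesis unfolding den_def .
qed

lemma tendsto_scaled_ratio_at_top:
  fixes s u :: real
  assumes "s > 0"
  shows "((\<lambda>\<alpha>. \<alpha> * s / (\<alpha> * s + u)) \<longlongrightarrow> 1) at_top"
proof -
  have "((\<lambda>\<alpha>. s / (s + u / \<alpha>)) \<longlongrightarrow> s / (s + 0)) at_top"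
    using assms
    by (intro tendsto_intros tendsto_divide_0[OF tendsto_const]
        filterlim_at_top_imp_at_infinity filterlim_ident) auto
  moreover have "\<forall>\<^sub>F \<alpha> in at_top. s / (s + u / \<alpha>) = \<alpha> * s / (\<alpha> * s + u)"
    using eventually_gt_at_top[of "0::real"] by eventually_elim (simp add: field_simps)
  ultimately show ?thesis
    using assms tendsto_cong by fastforce
qed

lemma proxy_tendsto_nbhd_mass:
  assumes A_nonneg: "\<forall>i<m. \<forall>j<n. A i j \<ge> 0" and y_pos: "\<forall>j<n. y j > 0"
    and T_sub: "T \<subseteq> {0..<n}"
  shows "(proxy m n A r y T \<longlongrightarrow> (\<Sum>i\<in>nbhd m A T. r i)) at_top"
proof -
  let ?S = "row_mass A y T" and ?U = "row_mass A y ({0..<n} - T)"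
  have "((\<lambda>\<alpha>. \<Sum>i\<in>{0..<m}. r i * (\<alpha> * ?S i / (\<alpha> * ?S i + ?U i)))
          \<longlongrightarrow> (\<Sum>i\<in>{0..<m}. if ?S i > 0 then r i else 0)) at_top"
  proof (intro tendsto_sum)
    fix i assume "i \<in> {0..<m}"
    then have "?S i \<ge> 0"
      using row_mass_nonneg[of m n A y T i] A_nonneg y_pos T_sub by (simp add: less_imp_le)
    then show "((\<lambda>\<alpha>. r i * (\<alpha> * ?S i / (\<alpha> * ?S i + ?U i)))
                 \<longlongrightarrow> (if ?S i > 0 then r i else 0)) at_top"
    proof (cases "?S i > 0")
      case True
      have "((\<lambda>\<alpha>. r i * (\<alpha> * ?S i / (\<alpha> * ?S i + ?U i))) \<longlongrightarrow> r i * 1) at_top"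
        by (rule tendsto_mult_left[OF tendsto_scaled_ratio_at_top[OF True]])
      then show ?thesis using True by simp
    qed simp
  qed
  moreover have "nbhd m A T = {i \<in> {0..<m}. ?S i > 0}"
    using nbhd_iff_row_mass_pos[OF A_nonneg y_pos T_sub] by auto
  then have "(\<Sum>i\<in>{0..<m}. if ?S i > 0 then r i else 0) = (\<Sum>i\<in>nbhd m A T. r i)"
    by (simp only: sum.inter_filter[symmetric] finite_atLeastLessThan)
  ultimately show ?thesis
    unfolding proxy_eq_row_mass[OF T_sub, abs_def] by simp
qed

lemma continuous_on_proxy:
  assumes A_nonneg: "\<forall>i<m. \<forall>j<n. A i j \<ge> 0" and A_rows: "\<forall>i<m. \<exists>j<n. A i j > 0"
    and y_pos: "\<forall>j<n. y j > 0" and T_sub: "T \<subseteq> {0..<n}"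
  shows "continuous_on {0<..} (proxy m n A r y T)"
proof -
  let ?S = "row_mass A y T" and ?U = "row_mass A y ({0..<n} - T)"
  have "\<alpha> * ?S i + ?U i > 0" if "i < m" "\<alpha> > 0" for i \<alpha>
  proof -
    have "?S i \<ge> 0" "?U i \<ge> 0" "?S i + ?U i > 0"
      using row_mass_nonneg[of m n A y _ i] row_mass_pos[OF A_nonneg A_rows y_pos that(1)]
        row_mass_split[OF T_sub, of A y i] assms that
      by (auto simp: less_imp_le)
    then show ?thesis
      using \<open>\<alpha> > 0\<close> by (cases "?S i > 0") (auto simp: add_pos_nonneg)
  qed
  then show ?thesis
    unfolding proxy_eq_row_mass[OF T_sub, abs_def]
    by (intro continuous_intros) (auto simp: less_le)
qed

lemma sum_colsum:
  assumes "\<forall>i<m. row_mass A y {0..<n} i \<noteq> 0"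
  shows "(\<Sum>j\<in>{0..<n}. colsum m n A r y j) = (\<Sum>i\<in>{0..<m}. r i)"
proof -
  have "(\<Sum>j\<in>{0..<n}. colsum m n A r y j) =
      (\<Sum>i\<in>{0..<m}. r i * row_mass A y {0..<n} i / row_mass A y {0..<n} i)"
    unfolding colsum_def row_mass_def
    by (subst sum.swap) (simp add: sum_divide_distrib[symmetric] sum_distrib_left)
  also have "\<dots> = (\<Sum>i\<in>{0..<m}. r i)"
    using assms by (intro sum.cong) auto
  finally show ?thesis .
qed

lemma sum_le_neg_of_separated:
  fixes a :: "'a \<Rightarrow> real"
  assumes I: "finite I" and T: "T \<subseteq> I" "T \<noteq> {}" "I - T \<noteq> {}"
    and sum_zero: "sum a I = 0" and "\<gamma> \<ge> 0"
    and below: "\<forall>j\<in>T. a j \<le> \<nu> - \<gamma>" and above: "\<forall>j\<in>I - T. \<nu> + \<gamma> \<le> a j"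
  shows "sum a T \<le> - \<gamma>"
proof (cases "\<nu> \<ge> 0")
  case True
  obtain j where j: "j \<in> I - T" using T(3) by blast
  have "\<gamma> \<le> a j" using above j True by force
  also have "\<dots> \<le> sum a (I - T)"
  proof (rule member_le_sum)
    show "0 \<le> a x" if "x \<in> I - T - {j}" for x
      using above that True \<open>\<gamma> \<ge> 0\<close> by force
  qed (use j I in auto)
  finally show ?thesis
    using sum.subset_diff[OF T(1) I, of a] sum_zero by linarith
next
  case False
  obtain j where j: "j \<in> T" using T(2) by blast
  have "sum a (T - {j}) \<le> 0"
    using below False \<open>\<gamma> \<ge> 0\<close> by (intro sum_nonpos) force
  then have "sum a T \<le> a j"
    using sum.remove[OF finite_subset[OF T(1) I] j, of a] by linarith
  moreover have "a j \<le> \<nu> - \<gamma>" using below j by blast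
  ultimately show ?thesis using False by linarith
qed

lemma proxy_one_add_margin_le:
  assumes A_nonneg: "\<forall>i<m. \<forall>j<n. A i j \<ge> 0" and A_rows: "\<forall>i<m. \<exists>j<n. A i j > 0"
    and y_pos: "\<forall>j<n. y j > 0"
    and sums_eq: "(\<Sum>i\<in>{0..<m}. r i) = (\<Sum>j\<in>{0..<n}. c j)"
    and T_ne: "T \<noteq> {}" and T_sub: "T \<subseteq> {0..<n}" and T_proper: "T \<noteq> {0..<n}"
    and margin: "margin_cond m n A r c y T \<gamma>"
  shows "proxy m n A r y T 1 + \<gamma> \<le> (\<Sum>j\<in>T. c j)"
proof -
  let ?a = "\<lambda>j. colsum m n A r y j - c j"
  obtain \<nu> where "\<forall>j\<in>T. ?a j \<le> \<nu> - \<gamma>" "\<forall>j\<in>{0..<n} - T. \<nu> + \<gamma> \<le> ?a j" "\<gamma> \<ge> 0"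
    using margin unfolding margin_cond_def by blast
  moreover have "sum ?a {0..<n} = 0"
    using sum_colsum[of m A y n r] row_mass_pos[OF A_nonneg A_rows y_pos] sums_eq
    by (simp add: sum_subtractf less_imp_neq[symmetric])
  ultimately have "sum ?a T \<le> - \<gamma>"
    using T_ne T_sub T_proper by (intro sum_le_neg_of_separated[of "{0..<n}"]) auto
  moreover have "proxy m n A r y T 1 = (\<Sum>j\<in>T. colsum m n A r y j)"
  proof -
    have "(\<lambda>k. if k \<in> T then 1 * y k else y k) = y" by auto
    then show ?thesis unfolding proxy_def by simp
  qed
  ultimately show ?thesis
    by (simp add: sum_subtractf)
qed

theorem proposition6p9:
  fixes m n :: nat and A :: "nat \<Rightarrow> nat \<Rightarrow> real" and r c y :: "nat \<Rightarrow> real"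
    and T :: "nat set" and \<gamma> \<delta> :: real
  assumes A_nonneg: "\<forall>i<m. \<forall>j<n. A i j \<ge> 0"
    and A_rows: "\<forall>i<m. \<exists>j<n. A i j > 0"
    and r_pos: "\<forall>i<m. r i > 0"
    and c_pos: "\<forall>j<n. c j > 0"
    and sums_eq: "(\<Sum>i\<in>{0..<m}. r i) = (\<Sum>j\<in>{0..<n}. c j)"
    and y_pos: "\<forall>j<n. y j > 0"
    and T_ne: "T \<noteq> {}" and T_sub: "T \<subseteq> {0..<n}" and T_proper: "T \<noteq> {0..<n}"
    and margin: "has_margin m n A r c y T \<gamma>" and gamma_pos: "\<gamma> > 0"
    and big: "(\<Sum>i\<in>nbhd m A T. r i) \<ge> (\<Sum>j\<in>T. c j)"
    and delta: "0 \<le> \<delta>" "\<delta> < \<gamma>"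
  shows "\<exists>\<alpha>::real. \<alpha> > 0 \<and> proxy m n A r y T \<alpha> = proxy m n A r y T 1 + \<delta>"
proof -
  let ?h = "proxy m n A r y T"
  have "?h 1 + \<delta> < (\<Sum>j\<in>T. c j)"
    using proxy_one_add_margin_le[OF A_nonneg A_rows y_pos sums_eq T_ne T_sub T_proper] margin delta
    unfolding has_margin_def by fastforce
  also have "\<dots> \<le> (\<Sum>i\<in>nbhd m A T. r i)"
    by (rule big)
  finally have "\<forall>\<^sub>F \<alpha> in at_top. ?h \<alpha> > ?h 1 + \<delta>"
    by (rule order_tendstoD(1)[OF proxy_tendsto_nbhd_mass[OF A_nonneg y_pos T_sub]])
  then obtain b where "b \<ge> 1" "?h b > ?h 1 + \<delta>"
    unfolding eventually_at_top_linorder by (meson max.cobounded1 max.cobounded2)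
  moreover have "continuous_on {1..b} ?h"
    by (rule continuous_on_subset[OF continuous_on_proxy[OF A_nonneg A_rows y_pos T_sub]]) auto
  ultimately obtain \<alpha> where "1 \<le> \<alpha>" "?h \<alpha> = ?h 1 + \<delta>"
    using IVT'[of ?h 1 "?h 1 + \<delta>" b] \<open>\<delta> \<ge> 0\<close> by auto
  then show ?thesis by (intro exI[of _ \<alpha>]) auto
qed

end
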